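(* Let $(A,\dagger)$ be a commutative unital $\mathbb{K}$-algebra with involution, and extend $\dagger$ to $T^+(A)$ letterwise, $(a_1\otimes\cdots\otimes a_n)^\dagger=a_1^\dagger\otimes\cdots\otimes a_n^\dagger$. On $T^+(A)$ define $$X\prec Y:=X\,\bar\bullet^\ell\,P_A(Y),\qquad X\succ Y:=P_A(X)\,\bar\bullet^\ell\,Y,\qquad X\bullet Y:=-X\,\bar\bullet^\ell\,P_A(1_A)\,\bar\bullet^\ell\,Y .$$ Then $(T^+(A),\prec,\succ,\bullet)$ is a commutative tridendriform algebra, and $(X\prec Y)^\dagger=X^\dagger\prec Y^\dagger$ and $(X\bullet Y)^\dagger=X^\dagger\bullet Y^\dagger$ for all $X,Y\in T^+(A)$.
   Context: $\mathbb{K}$ is a field of characteristic $0$; $A$ has product $[a;b]$ and unit $1_A$; an involution is a linear $\dagger$ with $\dagger^2=\mathrm{id}$ and $[a;b]^\dagger=[b^\dagger;a^\dagger]$. $T(A)=\bigoplus_{n\ge0}A^{\otimes n}$, $A^{\otimes0}=\mathbb{K}1_{\mathbb{K}}$, $a\otimes1_{\mathbb{K}}$ identified with $a$. The left-shift shuffle $\bullet^\ell$ is the bilinear product on $T(A)$ with $k1_{\mathbb{K}}\bullet^\ell U=kU=U\bullet^\ell k1_{\mathbb{K}}$ and $(a\otimes U)\bullet^\ell(b\otimes V)=a\otimes(U\bullet^\ell(b\otimes V))+b\otimes((a\otimes U)\bullet^\ell V)-[a;b]\otimes1_A\otimes(U\bullet^\ell V)$ for $a,b\in A$. $T^+(A)=A\otimes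 T(A)$ with $(a\otimes U)\bar\bullet^\ell(b\otimes V)=[a;b]\otimes(U\bullet^\ell V)$, unit $1_A=1_A\otimes1_{\mathbb{K}}$; $P_A(a_1\otimes\cdots\otimes a_n)=1_A\otimes a_1\otimes\cdots\otimes a_n$, so $P_A(1_A)=1_A\otimes1_A$. A tridendriform algebra is a vector space with bilinear $\prec,\succ,\bullet$ such that, with $x\star y:=x\prec y+x\succ y+x\bullet y$: $(x\prec y)\prec z=x\prec(y\star z)$, $(x\succ y)\prec z=x\succ(y\prec z)$, $(x\star y)\succ z=x\succ(y\succ z)$, $(x\succ y)\bullet z=x\succ(y\bullet z)$, $(x\prec y)\bullet z=x\bullet(y\succ z)$, $(x\bullet y)\prec z=x\bullet(y\prec z)$, $(x\bullet y)\bullet z=x\bullet(y\bullet z)$. It is commutative if $x\prec y=y\succ x$ and $x\bullet y=y\bullet x$. *)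

theory Defs
  imports Main "HOL.Modules"
begin

text \<open>Model of the tensor algebra T(A) over a field 'k, for a commutative unital
  'k-algebra A (carrier type 'a, ring structure of 'a, scalar action scale).
  An element of the free 'k-vector space on words of A is a finitely supported
  coefficient function  'a list \<Rightarrow> 'k ; the word a1...an stands for a1 (x) ... (x) an
  and the empty word stands for 1_K.  T(A) is this free space modulo the subspace
  tnull generated by the multilinearity relations; identities in T(A) are
  therefore stated as  X - Y \<in> tnull.\<close>

definition fsupp :: "('a list \<Rightarrow> 'k::zero) \<Rightarrow> bool" where
  "fsupp X \<longleftrightarrow> finite {w. X w \<noteq> 0}"

text \<open>elements of T^+(A) = A (x) T(A): no component on the empty word\<close>
definition tplus :: "('a list \<Rightarrow> 'k::zero) \<Rightarrow> bool" where
  "tplus X \<longleftrightarrow> fsupp X \<and> X [] = 0"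

definition wsingle :: "'a list \<Rightarrow> ('a list \<Rightarrow> 'k::{zero,one})" where
  "wsingle u = (\<lambda>w. if w = u then 1 else 0)"

definition tpre :: "'a \<Rightarrow> ('a list \<Rightarrow> 'k::zero) \<Rightarrow> ('a list \<Rightarrow> 'k)" where
  "tpre a F = (\<lambda>w. case w of [] \<Rightarrow> 0 | x # w' \<Rightarrow> if x = a then F w' else 0)"

fun lsh :: "'a::comm_ring_1 list \<Rightarrow> 'a list \<Rightarrow> ('a list \<Rightarrow> 'k::comm_ring_1)" where
  "lsh [] V = wsingle V"
| "lsh (a # U) [] = wsingle (a # U)"
| "lsh (a # U) (b # V) =
     (\<lambda>w. tpre a (lsh U (b # V)) w + tpre b (lsh (a # U) V) w
          - tpre (a * b) (tpre 1 (lsh U V)) w)"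

definition bilext :: "('a list \<Rightarrow> 'a list \<Rightarrow> ('a list \<Rightarrow> 'k::comm_ring_1))
    \<Rightarrow> ('a list \<Rightarrow> 'k) \<Rightarrow> ('a list \<Rightarrow> 'k) \<Rightarrow> ('a list \<Rightarrow> 'k)" where
  "bilext f X Y = (\<lambda>w. \<Sum>u\<in>{u. X u \<noteq> 0}. \<Sum>v\<in>{v. Y v \<noteq> 0}. X u * Y v * f u v w)"

definition shuf :: "('a::comm_ring_1 list \<Rightarrow> 'k::comm_ring_1) \<Rightarrow> ('a list \<Rightarrow> 'k) \<Rightarrow> ('a list \<Rightarrow> 'k)" where
  "shuf = bilext lsh"

fun barw :: "'a::comm_ring_1 list \<Rightarrow> 'a list \<Rightarrow> ('a list \<Rightarrow> 'k::comm_ring_1)" where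
  "barw (a # U) (b # V) = tpre (a * b) (lsh U V)"
| "barw _ _ = (\<lambda>w. 0)"

definition bar :: "('a::comm_ring_1 list \<Rightarrow> 'k::comm_ring_1) \<Rightarrow> ('a list \<Rightarrow> 'k) \<Rightarrow> ('a list \<Rightarrow> 'k)" where
  "bar = bilext barw"

definition PA :: "('a::comm_ring_1 list \<Rightarrow> 'k::zero) \<Rightarrow> ('a list \<Rightarrow> 'k)" where
  "PA X = tpre 1 X"

definition tprec :: "('a::comm_ring_1 list \<Rightarrow> 'k::comm_ring_1) \<Rightarrow> ('a list \<Rightarrow> 'k) \<Rightarrow> ('a list \<Rightarrow> 'k)" where
  "tprec X Y = bar X (PA Y)"

definition tsucc :: "('a::comm_ring_1 list \<Rightarrow> 'k::comm_ring_1) \<Rightarrow> ('a list \<Rightarrow> 'k) \<Rightarrow> ('a list \<Rightarrow> 'k)" where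
  "tsucc X Y = bar (PA X) Y"

text \<open>X \<bullet> Y = - X bar P_A(1_A) bar Y, where P_A(1_A) = 1_A (x) 1_A\<close>
definition tbul :: "('a::comm_ring_1 list \<Rightarrow> 'k::comm_ring_1) \<Rightarrow> ('a list \<Rightarrow> 'k) \<Rightarrow> ('a list \<Rightarrow> 'k)" where
  "tbul X Y = (\<lambda>w. - bar (bar X (PA (wsingle [1]))) Y w)"

definition tstar :: "('a::comm_ring_1 list \<Rightarrow> 'k::comm_ring_1) \<Rightarrow> ('a list \<Rightarrow> 'k) \<Rightarrow> ('a list \<Rightarrow> 'k)" where
  "tstar X Y = (\<lambda>w. tprec X Y w + tsucc X Y w + tbul X Y w)"

definition tdag :: "('a \<Rightarrow> 'a) \<Rightarrow> ('a list \<Rightarrow> 'k) \<Rightarrow> ('a list \<Rightarrow> 'k)" where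
  "tdag d X = (\<lambda>w. X (map d w))"

inductive_set tnull :: "('k::comm_ring_1 \<Rightarrow> 'a::ab_group_add \<Rightarrow> 'a) \<Rightarrow> ('a list \<Rightarrow> 'k) set"
  for scale where
  zero: "(\<lambda>w. 0) \<in> tnull scale"
| add_rel: "(\<lambda>w. wsingle (u @ (a + b) # v) w - wsingle (u @ a # v) w - wsingle (u @ b # v) w)
              \<in> tnull scale"
| scale_rel: "(\<lambda>w. wsingle (u @ scale c a # v) w - c * wsingle (u @ a # v) w) \<in> tnull scale"
| plus: "X \<in> tnull scale \<Longrightarrow> Y \<in> tnull scale \<Longrightarrow> (\<lambda>w. X w + Y w) \<in> tnull scale"
| smult: "X \<in> tnull scale \<Longrightarrow> (\<lambda>w. c * X w) \<in> tnull scale"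

definition teq :: "('k::comm_ring_1 \<Rightarrow> 'a::ab_group_add \<Rightarrow> 'a) \<Rightarrow> ('a list \<Rightarrow> 'k) \<Rightarrow> ('a list \<Rightarrow> 'k) \<Rightarrow> bool" where
  "teq scale X Y \<longleftrightarrow> (\<lambda>w. X w - Y w) \<in> tnull scale"

end

theory Submission
  imports Defs
begin

text \<open>All identities hold already in the free vector space on words, before the quotient by
  the multilinearity relations, so they are proved as equalities of coefficient functions.
  On words the left-shift shuffle is commutative and associative, the latter by induction on
  the total length of the three words. Hence the product bar-bullet, which multiplies the first
  letters and shuffles the tails, is commutative and associative, and for X, Y in T^+(A) it
  satisfies P_A(X) bar-bullet P_A(Y) = P_A(X star Y), because the three terms of X star Y are
  the three terms of the shuffle recursion. Each tridendriform axiom is then a rearrangement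
  of a bar-bullet product of three factors. Finally, A being commutative, the involution is a
  ring automorphism, so acting letterwise it commutes with the shuffle, with bar-bullet and
  with P_A, and it fixes P_A(1_A).\<close>

section \<open>Linear extension of kernels on words\<close>

definition supp :: "('b \<Rightarrow> 'k::zero) \<Rightarrow> 'b set" where
  "supp F = {w. F w \<noteq> 0}"

definition linext :: "('b \<Rightarrow> 'c \<Rightarrow> 'k::comm_ring_1) \<Rightarrow> ('b \<Rightarrow> 'k) \<Rightarrow> 'c \<Rightarrow> 'k" where
  "linext K F = (\<lambda>w. \<Sum>u\<in>supp F. F u * K u w)"

lemma linext_eq_sum_superset:
  assumes "finite S" "supp F \<subseteq> S"
  shows "linext K F w = (\<Sum>u\<in>S. F u * K u w)"
  unfolding linext_def
  by (rule sum.mono_neutral_left) (use assms in \<open>auto simp: supp_def\<close>)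

lemma bilext_eq_linext: "bilext f X Y = linext (\<lambda>u. linext (f u) Y) X"
  unfolding bilext_def linext_def supp_def
  by (rule ext) (simp add: sum_distrib_left mult.assoc)

lemma supp_zero [simp]: "supp (\<lambda>w. 0) = {}"
  by (simp add: supp_def)

lemma linext_zero [simp]: "linext K (\<lambda>w. 0) = (\<lambda>w. 0)"
  by (simp add: linext_def)

lemma supp_wsingle [simp]: "supp (wsingle u :: _ \<Rightarrow> 'k::zero_neq_one) = {u}"
  by (auto simp: supp_def wsingle_def)

lemma linext_wsingle [simp]: "linext K (wsingle u) = K u"
  by (rule ext) (simp add: linext_def, simp add: wsingle_def)

lemma linext_wsingle_kernel:
  assumes "finite (supp F)"
  shows "linext wsingle F = F"
proof (rule ext)
  fix w
  show "linext wsingle F w = F w"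
    using assms unfolding linext_def
    by (cases "w \<in> supp F") (auto simp: wsingle_def supp_def if_distrib cong: if_cong)
qed

lemma linext_cong: "(\<And>u. u \<in> supp F \<Longrightarrow> K u = K' u) \<Longrightarrow> linext K F = linext K' F"
  unfolding linext_def by (rule ext) (rule sum.cong, auto)

lemma linext_add_kernel: "linext (\<lambda>u w. K u w + L u w) F = (\<lambda>w. linext K F w + linext L F w)"
  unfolding linext_def by (simp add: sum.distrib distrib_left)

lemma linext_diff_kernel: "linext (\<lambda>u w. K u w - L u w) F = (\<lambda>w. linext K F w - linext L F w)"
  unfolding linext_def by (simp add: sum_subtractf right_diff_distrib)

lemma linext_minus_kernel: "linext (\<lambda>u w. - K u w) F = (\<lambda>w. - linext K F w)"
  unfolding linext_def by (simp add: sum_negf)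

lemma linext_zero_kernel [simp]: "linext (\<lambda>u w. 0) F = (\<lambda>w. 0)"
  unfolding linext_def by simp

lemma supp_linext_subset: "supp (linext K F) \<subseteq> (\<Union>u\<in>supp F. supp (K u))"
  unfolding linext_def supp_def by (auto elim!: sum.not_neutral_contains_not_neutral)

lemma finite_supp_linext:
  "finite (supp F) \<Longrightarrow> (\<And>u. u \<in> supp F \<Longrightarrow> finite (supp (K u))) \<Longrightarrow>
    finite (supp (linext K F))"
  using supp_linext_subset by (metis (no_types, lifting) finite_UN_I finite_subset)

lemma linext_linext:
  assumes F: "finite (supp F)" and L: "\<And>u. u \<in> supp F \<Longrightarrow> finite (supp (L u))"
  shows "linext K (linext L F) = linext (\<lambda>u. linext K (L u)) F"
proof (rule ext)
  fix w
  define S where "S = (\<Union>u\<in>supp F. supp (L u))"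
  have S: "finite S" using F L by (simp add: S_def)
  have "linext K (linext L F) w = (\<Sum>s\<in>S. linext L F s * K s w)"
    using S supp_linext_subset[of L F] by (simp add: linext_eq_sum_superset S_def)
  also have "\<dots> = (\<Sum>u\<in>supp F. F u * (\<Sum>s\<in>S. L u s * K s w))"
    by (simp add: linext_def sum_distrib_right sum_distrib_left mult.assoc sum.swap[of _ S])
  also have "\<dots> = (\<Sum>u\<in>supp F. F u * linext K (L u) w)"
    by (rule sum.cong[OF refl]) (subst linext_eq_sum_superset[OF S], auto simp: S_def)
  finally show "linext K (linext L F) w = linext (\<lambda>u. linext K (L u)) F w"
    by (simp add: linext_def)
qed

lemma linext_swap: "linext (\<lambda>u. linext (K u) G) F = linext (\<lambda>v. linext (\<lambda>u. K u v) F) G"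
  unfolding linext_def
  by (rule ext) (simp add: sum_distrib_left sum.swap[of _ "supp F"] mult.left_commute)

lemma finite_supp_add [simp]:
  "finite (supp F) \<Longrightarrow> finite (supp G) \<Longrightarrow> finite (supp (\<lambda>w. F w + G w :: 'k::monoid_add))"
  unfolding supp_def by (rule finite_subset[of _ "{w. F w \<noteq> 0} \<union> {w. G w \<noteq> 0}"]) auto

lemma finite_supp_diff [simp]:
  "finite (supp F) \<Longrightarrow> finite (supp G) \<Longrightarrow> finite (supp (\<lambda>w. F w - G w :: 'k::ab_group_add))"
  unfolding supp_def by (rule finite_subset[of _ "{w. F w \<noteq> 0} \<union> {w. G w \<noteq> 0}"]) auto

lemma linext_add:
  assumes "finite (supp F)" "finite (supp G)"
  shows "linext K (\<lambda>w. F w + G w) = (\<lambda>w. linext K F w + linext K G w)"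
proof (rule ext)
  fix w
  have "supp (\<lambda>w. F w + G w) \<subseteq> supp F \<union> supp G" by (auto simp: supp_def)
  then show "linext K (\<lambda>w. F w + G w) w = linext K F w + linext K G w"
    using assms by (simp add: linext_eq_sum_superset[of "supp F \<union> supp G"] sum.distrib distrib_right)
qed

lemma linext_diff:
  assumes "finite (supp F)" "finite (supp G)"
  shows "linext K (\<lambda>w. F w - G w) = (\<lambda>w. linext K F w - linext K G w)"
proof (rule ext)
  fix w
  have "supp (\<lambda>w. F w - G w) \<subseteq> supp F \<union> supp G" by (auto simp: supp_def)
  then show "linext K (\<lambda>w. F w - G w) w = linext K F w - linext K G w"
    using assms by (simp add: linext_eq_sum_superset[of "supp F \<union> supp G"] sum_subtractf left_diff_distrib)
qed

lemma linext_minus: "linext K (\<lambda>w. - F w) = (\<lambda>w. - linext K F w)"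
  unfolding linext_def supp_def by (simp add: sum_negf)

section \<open>The left-shift shuffle\<close>

lemma supp_tpre: "supp (tpre a F) = Cons a ` supp F"
proof (rule set_eqI)
  show "w \<in> supp (tpre a F) \<longleftrightarrow> w \<in> Cons a ` supp F" for w
    by (cases w) (auto simp: supp_def tpre_def)
qed

lemma finite_supp_tpre [simp]: "finite (supp (tpre a F)) \<longleftrightarrow> finite (supp F)"
  by (simp add: supp_tpre finite_image_iff)

lemma tpre_wsingle [simp]: "tpre a (wsingle u) = wsingle (a # u)"
  by (rule ext) (auto simp: tpre_def wsingle_def split: list.splits)

lemma tpre_add: "tpre a (\<lambda>w. F w + G w :: 'k::ab_group_add) = (\<lambda>w. tpre a F w + tpre a G w)"
  by (rule ext) (auto simp: tpre_def split: list.splits)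

lemma tpre_diff: "tpre a (\<lambda>w. F w - G w :: 'k::ab_group_add) = (\<lambda>w. tpre a F w - tpre a G w)"
  by (rule ext) (auto simp: tpre_def split: list.splits)

lemma linext_tpre_kernel: "linext (\<lambda>u. tpre a (K u)) F = tpre a (linext K F)"
  by (rule ext) (auto simp: tpre_def linext_def split: list.splits)

lemma linext_tpre: "linext K (tpre a F) = linext (\<lambda>u. K (a # u)) F"
  unfolding linext_def supp_tpre
  by (rule ext) (simp add: sum.reindex tpre_def)

lemma lsh_Nil_right [simp]: "lsh U [] = wsingle U"
  by (cases U) auto

lemma finite_supp_lsh [simp]: "finite (supp (lsh U V :: _ \<Rightarrow> 'k::comm_ring_1))"
  by (induction U V rule: lsh.induct) (auto simp: tpre_diff)

lemma lsh_commute: "lsh U V = lsh V U"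
  by (induction U V rule: lsh.induct) (auto simp: mult.commute)

lemma lsh_one_Cons: "lsh (1 # U) V = tpre 1 (lsh U V)"
  by (induction V) (simp_all add: tpre_add tpre_diff)

lemma shuf_eq_linext: "shuf F G = linext (\<lambda>u. linext (lsh u) G) F"
  by (simp add: shuf_def bilext_eq_linext)

lemma finite_supp_shuf [simp]:
  "finite (supp F) \<Longrightarrow> finite (supp G) \<Longrightarrow> finite (supp (shuf F G))"
  by (simp add: shuf_eq_linext finite_supp_linext)

lemma shuf_wsingle: "shuf (wsingle u) (wsingle v) = lsh u v"
  by (simp add: shuf_eq_linext)

lemma shuf_wsingle_Nil [simp]:
  fixes G :: "'a::comm_ring_1 list \<Rightarrow> 'k::comm_ring_1"
  assumes "finite (supp G)"
  shows "shuf (wsingle []) G = G"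
proof -
  have "lsh [] = (wsingle :: 'a list \<Rightarrow> _ \<Rightarrow> 'k)"
    by (rule ext) simp
  then show ?thesis
    using assms by (simp add: shuf_eq_linext linext_wsingle_kernel)
qed

lemma shuf_commute: "shuf F G = shuf G F"
  unfolding shuf_eq_linext by (subst linext_swap) (simp add: lsh_commute)

lemma shuf_Nil_wsingle [simp]: "finite (supp F) \<Longrightarrow> shuf F (wsingle []) = F"
  by (metis shuf_commute shuf_wsingle_Nil)

lemma shuf_add_left:
  "finite (supp F) \<Longrightarrow> finite (supp G) \<Longrightarrow> shuf (\<lambda>w. F w + G w) H = (\<lambda>w. shuf F H w + shuf G H w)"
  by (simp add: shuf_eq_linext linext_add)

lemma shuf_diff_left:
  "finite (supp F) \<Longrightarrow> finite (supp G) \<Longrightarrow> shuf (\<lambda>w. F w - G w) H = (\<lambda>w. shuf F H w - shuf G H w)"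
  by (simp add: shuf_eq_linext linext_diff)

lemma shuf_add_right:
  "finite (supp F) \<Longrightarrow> finite (supp G) \<Longrightarrow> shuf H (\<lambda>w. F w + G w) = (\<lambda>w. shuf H F w + shuf H G w)"
  by (simp add: shuf_eq_linext linext_add linext_add_kernel)

lemma shuf_diff_right:
  "finite (supp F) \<Longrightarrow> finite (supp G) \<Longrightarrow> shuf H (\<lambda>w. F w - G w) = (\<lambda>w. shuf H F w - shuf H G w)"
  by (simp add: shuf_eq_linext linext_diff linext_diff_kernel)

lemma shuf_tpre_one_left: "shuf (tpre 1 F) G = tpre 1 (shuf F G)"
proof -
  have lsh_one: "lsh (1 # u) = (\<lambda>v. tpre 1 (lsh u v))" for u :: "'a list"
    by (rule ext) (simp add: lsh_one_Cons)
  show ?thesis by (simp add: shuf_eq_linext linext_tpre linext_tpre_kernel lsh_one)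
qed

lemma shuf_tpre_one_right: "shuf G (tpre 1 F) = tpre 1 (shuf G F)"
  by (metis shuf_commute shuf_tpre_one_left)

lemma shuf_tpre_tpre:
  "finite (supp F) \<Longrightarrow> finite (supp G) \<Longrightarrow> shuf (tpre a F) (tpre b G) =
    (\<lambda>w. tpre a (shuf F (tpre b G)) w + tpre b (shuf (tpre a F) G) w - tpre (a * b) (tpre 1 (shuf F G)) w)"
  by (simp add: shuf_eq_linext linext_tpre linext_add_kernel linext_diff_kernel linext_tpre_kernel)

lemma shuf_shuf_tpre_left:
  assumes "finite (supp F)" "finite (supp G)" "finite (supp H)"
  shows "shuf (shuf (tpre a F) (tpre b G)) (tpre c H) = (\<lambda>w.
      tpre a (shuf (shuf F (tpre b G)) (tpre c H)) w
    + tpre b (shuf (shuf (tpre a F) G) (tpre c H)) w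
    + tpre c (shuf (shuf (tpre a F) (tpre b G)) H) w
    - tpre (a * b) (tpre 1 (shuf (shuf F G) (tpre c H))) w
    - tpre (a * c) (tpre 1 (shuf (shuf F (tpre b G)) H)) w
    - tpre (b * c) (tpre 1 (shuf (shuf (tpre a F) G) H)) w
    + tpre (a * b * c) (tpre 1 (tpre 1 (shuf (shuf F G) H))) w)"
  using assms
  by (simp add: shuf_tpre_tpre shuf_add_left shuf_diff_left shuf_tpre_one_left tpre_add tpre_diff)
    (rule ext, simp add: algebra_simps)

lemma shuf_shuf_tpre_right:
  assumes "finite (supp F)" "finite (supp G)" "finite (supp H)"
  shows "shuf (tpre a F) (shuf (tpre b G) (tpre c H)) = (\<lambda>w.
      tpre a (shuf F (shuf (tpre b G) (tpre c H))) w
    + tpre b (shuf (tpre a F) (shuf G (tpre c H))) w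
    + tpre c (shuf (tpre a F) (shuf (tpre b G) H)) w
    - tpre (a * b) (tpre 1 (shuf F (shuf G (tpre c H)))) w
    - tpre (a * c) (tpre 1 (shuf F (shuf (tpre b G) H))) w
    - tpre (b * c) (tpre 1 (shuf (tpre a F) (shuf G H))) w
    + tpre (a * (b * c)) (tpre 1 (tpre 1 (shuf F (shuf G H)))) w)"
  using assms
  by (simp add: shuf_tpre_tpre shuf_add_right shuf_diff_right shuf_tpre_one_right tpre_add tpre_diff)
    (rule ext, simp add: algebra_simps)

text \<open>Two steps of the shuffle recursion expand each side into seven terms (the two lemmas
  above); they match pairwise by associativity for words of smaller total length.\<close>

lemma shuf_assoc_wsingle:
  "shuf (shuf (wsingle U) (wsingle V)) (wsingle W) =
    (shuf (wsingle U) (shuf (wsingle V) (wsingle W)) :: 'a::comm_ring_1 list \<Rightarrow> 'k::comm_ring_1)"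
proof (induction "length U + length V + length W" arbitrary: U V W rule: less_induct)
  case less
  show ?case
  proof (cases "U = [] \<or> V = [] \<or> W = []")
    case True
    then show ?thesis by auto
  next
    case False
    then obtain a X b Y c Z where UVW: "U = a # X" "V = b # Y" "W = c # Z"
      by (meson neq_Nil_conv)
    have IH: "shuf (shuf (wsingle X') (wsingle Y')) (wsingle Z') =
        (shuf (wsingle X') (shuf (wsingle Y') (wsingle Z')) :: _ \<Rightarrow> 'k)"
      if "length X' + length Y' + length Z' < length U + length V + length W" for X' Y' Z' :: "'a list"
      using that by (rule less)
    show ?thesis
      using IH[of X "b # Y" "c # Z"] IH[of "a # X" Y "c # Z"] IH[of "a # X" "b # Y" Z]
        IH[of X Y "c # Z"] IH[of X "b # Y" Z] IH[of "a # X" Y Z] IH[of X Y Z]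
      by (simp add: UVW shuf_shuf_tpre_left shuf_shuf_tpre_right mult.assoc flip: tpre_wsingle)
  qed
qed

section \<open>The product bar-bullet\<close>

lemma bar_eq_linext: "bar X Y = linext (\<lambda>u. linext (barw u) Y) X"
  by (simp add: bar_def bilext_eq_linext)

lemma barw_Nil_left [simp]: "barw [] = (\<lambda>v w. 0)"
  by (rule ext) simp

lemma finite_supp_barw [simp]: "finite (supp (barw u v :: _ \<Rightarrow> 'k::comm_ring_1))"
  by (cases u; cases v) auto

lemma finite_supp_bar [simp]: "finite (supp X) \<Longrightarrow> finite (supp Y) \<Longrightarrow> finite (supp (bar X Y))"
  by (simp add: bar_eq_linext finite_supp_linext)

lemma barw_commute: "barw u v = barw v u"
  by (cases u; cases v) (auto simp: lsh_commute mult.commute)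

lemma bar_commute: "bar X Y = bar Y X"
  unfolding bar_eq_linext by (subst linext_swap) (simp add: barw_commute)

lemma bar_tpre_tpre: "bar (tpre a F) (tpre b G) = tpre (a * b) (shuf F G)"
  by (simp add: bar_eq_linext linext_tpre linext_tpre_kernel shuf_eq_linext)

lemma bar_minus_left: "bar (\<lambda>w. - F w) G = (\<lambda>w. - bar F G w)"
  by (simp add: bar_eq_linext linext_minus)

lemma bar_minus_right: "bar G (\<lambda>w. - F w) = (\<lambda>w. - bar G F w)"
  by (metis bar_commute bar_minus_left)

lemma bar_eq_linext_right: "finite (supp Y) \<Longrightarrow> bar X Y = linext (\<lambda>v. bar X (wsingle v)) Y"
  unfolding bar_eq_linext by (subst linext_swap) (simp add: linext_wsingle_kernel)

lemma bar_assoc_wsingle: "bar (barw u v) (wsingle z) = bar (wsingle u) (barw v z)"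
proof (cases "u = [] \<or> v = [] \<or> z = []")
  case True
  then show ?thesis by (auto simp: bar_eq_linext)
next
  case False
  then obtain a U b V c Z where uvz: "u = a # U" "v = b # V" "z = c # Z"
    by (meson neq_Nil_conv)
  have "bar (barw u v) (wsingle z) = tpre (a * b * c) (shuf (shuf (wsingle U) (wsingle V)) (wsingle Z))"
    by (simp add: uvz bar_tpre_tpre shuf_wsingle flip: tpre_wsingle)
  also have "\<dots> = tpre (a * (b * c)) (shuf (wsingle U) (shuf (wsingle V) (wsingle Z)))"
    by (simp only: shuf_assoc_wsingle mult.assoc)
  also have "\<dots> = bar (wsingle u) (barw v z)"
    by (simp add: uvz bar_tpre_tpre shuf_wsingle flip: tpre_wsingle)
  finally show ?thesis .
qed

lemma bar_assoc:
  assumes "finite (supp X)" "finite (supp Y)" "finite (supp Z)"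
  shows "bar (bar X Y) Z = bar X (bar Y Z)"
proof -
  have "bar (bar X Y) Z = linext (\<lambda>u. linext (\<lambda>v. bar (barw u v) Z) Y) X"
    using assms unfolding bar_eq_linext by (simp add: linext_linext finite_supp_linext)
  also have "\<dots> = linext (\<lambda>u. linext (\<lambda>v. linext (\<lambda>z. bar (wsingle u) (barw v z)) Z) Y) X"
    using assms by (subst bar_eq_linext_right) (simp_all add: bar_assoc_wsingle)
  also have "\<dots> = bar X (bar Y Z)"
    using assms unfolding bar_eq_linext by (simp add: linext_linext finite_supp_linext)
  finally show ?thesis .
qed

lemma bar_left_commute:
  "finite (supp X) \<Longrightarrow> finite (supp Y) \<Longrightarrow> finite (supp Z) \<Longrightarrow> bar X (bar Y Z) = bar Y (bar X Z)"
  by (metis bar_assoc bar_commute)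

lemma fsupp_iff_finite_supp: "fsupp F \<longleftrightarrow> finite (supp F)"
  by (simp add: fsupp_def supp_def)

lemma tplus_finite_supp: "tplus X \<Longrightarrow> finite (supp X)"
  by (simp add: tplus_def fsupp_iff_finite_supp)

lemma Nil_notin_supp_tplus: "tplus X \<Longrightarrow> [] \<notin> supp X"
  by (simp add: tplus_def supp_def)

section \<open>The tridendriform structure\<close>

lemma finite_supp_PA [simp]: "finite (supp (PA X)) \<longleftrightarrow> finite (supp X)"
  by (simp add: PA_def)

lemma tprec_eq_linext: "tprec X Y = linext (\<lambda>u. linext (\<lambda>v. barw u (1 # v)) Y) X"
  by (simp add: tprec_def bar_eq_linext PA_def linext_tpre)

lemma tsucc_eq_linext: "tsucc X Y = linext (\<lambda>u. linext (\<lambda>v. barw (1 # u) v) Y) X"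
  by (simp add: tsucc_def bar_eq_linext PA_def linext_tpre)

lemma tbul_eq_linext:
  assumes "finite (supp X)" "finite (supp Y)"
  shows "tbul X Y = linext (\<lambda>u. linext (\<lambda>v w. - bar (barw u [1, 1]) (wsingle v) w) Y) X"
proof -
  have "bar (bar X (PA (wsingle [1]))) Y = linext (\<lambda>u. bar (barw u [1, 1]) Y) X"
    using assms(1) by (simp add: bar_eq_linext PA_def linext_linext)
  also have "\<dots> = linext (\<lambda>u. linext (\<lambda>v. bar (barw u [1, 1]) (wsingle v)) Y) X"
    by (intro linext_cong) (rule bar_eq_linext_right[OF assms(2)])
  finally show ?thesis
    by (simp add: tbul_def linext_minus_kernel)
qed

text \<open>On nonempty words the three summands of X star Y are the three terms of the recursion
  defining the left-shift shuffle.\<close>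

lemma star_kernel_eq_lsh:
  assumes "u \<noteq> []" "v \<noteq> []"
  shows "(\<lambda>w. barw u (1 # v) w + barw (1 # u) v w - bar (barw u [1, 1]) (wsingle v) w)
    = (lsh u v :: 'a::comm_ring_1 list \<Rightarrow> 'k::comm_ring_1)"
proof -
  obtain a U b V where uv: "u = a # U" "v = b # V"
    using assms by (meson neq_Nil_conv)
  have lsh_one: "lsh U [1] = tpre 1 (wsingle U)"
    by (subst lsh_commute) (simp add: lsh_one_Cons)
  have "bar (barw u [1, 1]) (wsingle v) = (tpre (a * b) (shuf (lsh U [1]) (wsingle V)) :: _ \<Rightarrow> 'k)"
    by (simp add: uv bar_tpre_tpre flip: tpre_wsingle)
  also have "\<dots> = tpre (a * b) (tpre 1 (lsh U V))"
    by (simp only: lsh_one shuf_tpre_one_left shuf_wsingle)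
  finally show ?thesis
    by (simp add: uv)
qed

lemma tstar_eq_shuf:
  assumes X: "tplus X" and Y: "tplus Y"
  shows "tstar X Y = shuf X Y"
proof -
  have "tstar X Y = linext (\<lambda>u. linext (\<lambda>v w. barw u (1 # v) w + barw (1 # u) v w
      - bar (barw u [1, 1]) (wsingle v) w) Y) X"
    using X Y unfolding tstar_def tprec_eq_linext tsucc_eq_linext
    by (simp add: tbul_eq_linext tplus_finite_supp linext_add_kernel linext_diff_kernel
        linext_minus_kernel)
  also have "\<dots> = linext (\<lambda>u. linext (lsh u) Y) X"
    using Nil_notin_supp_tplus[OF X] Nil_notin_supp_tplus[OF Y]
    by (intro linext_cong) (metis star_kernel_eq_lsh)
  finally show ?thesis
    by (simp add: shuf_eq_linext)
qed

lemma bar_PA_PA: "tplus X \<Longrightarrow> tplus Y \<Longrightarrow> bar (PA X) (PA Y) = PA (tstar X Y)"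
  by (simp add: tstar_eq_shuf PA_def bar_tpre_tpre)

lemma tridendriform_axioms:
  fixes X Y Z :: "'a::comm_ring_1 list \<Rightarrow> 'k::comm_ring_1"
  assumes X: "tplus X" and Y: "tplus Y" and Z: "tplus Z"
  shows "tprec (tprec X Y) Z = tprec X (tstar Y Z)"
    and "tprec (tsucc X Y) Z = tsucc X (tprec Y Z)"
    and "tsucc (tstar X Y) Z = tsucc X (tsucc Y Z)"
    and "tbul (tsucc X Y) Z = tsucc X (tbul Y Z)"
    and "tbul (tprec X Y) Z = tbul X (tsucc Y Z)"
    and "tprec (tbul X Y) Z = tbul X (tprec Y Z)"
    and "tbul (tbul X Y) Z = tbul X (tbul Y Z)"
proof -
  have fin: "finite (supp X)" "finite (supp Y)" "finite (supp Z)"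
    using X Y Z by (simp_all add: tplus_finite_supp)
  show "tprec (tprec X Y) Z = tprec X (tstar Y Z)"
    using fin by (simp add: tprec_def bar_assoc bar_PA_PA[OF Y Z, symmetric])
  show "tprec (tsucc X Y) Z = tsucc X (tprec Y Z)"
    using fin by (simp add: tprec_def tsucc_def bar_assoc)
  show "tsucc (tstar X Y) Z = tsucc X (tsucc Y Z)"
    using fin by (simp add: tsucc_def bar_assoc bar_PA_PA[OF X Y, symmetric])
  show "tbul (tsucc X Y) Z = tsucc X (tbul Y Z)"
    using fin by (simp add: tbul_def tsucc_def bar_minus_left bar_minus_right bar_assoc)
  show "tbul (tprec X Y) Z = tbul X (tsucc Y Z)"
    using fin by (simp add: tbul_def tprec_def tsucc_def bar_minus_left bar_minus_right bar_assoc
        bar_left_commute[of "PA Y" "PA (wsingle [1])"])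
  show "tprec (tbul X Y) Z = tbul X (tprec Y Z)"
    using fin by (simp add: tbul_def tprec_def bar_minus_left bar_minus_right bar_assoc)
  show "tbul (tbul X Y) Z = tbul X (tbul Y Z)"
    using fin by (simp add: tbul_def bar_minus_left bar_minus_right bar_assoc)
qed

lemma tprec_eq_tsucc_swap: "tprec X Y = tsucc Y X"
  by (simp add: tprec_def tsucc_def bar_commute)

lemma tbul_commute:
  fixes X Y :: "'a::comm_ring_1 list \<Rightarrow> 'k::comm_ring_1"
  assumes "finite (supp X)" "finite (supp Y)"
  shows "tbul X Y = tbul Y X"
  using assms
  by (simp add: tbul_def bar_commute[of _ "PA (wsingle [1])"] bar_assoc bar_commute[of Y X])

section \<open>The letterwise involution\<close>

lemma map_involution: "(\<And>a. d (d a) = a) \<Longrightarrow> map d (map d w) = w"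
  by (induction w) auto

lemma tdag_tpre: "(\<And>a. d (d a) = a) \<Longrightarrow> tdag d (tpre a F) = tpre (d a) (tdag d F)"
  unfolding tdag_def tpre_def by (rule ext) (auto split: list.splits; metis)

lemma tdag_zero [simp]: "tdag d (\<lambda>w. 0) = (\<lambda>w. 0)"
  by (simp add: tdag_def)

lemma tdag_wsingle: "(\<And>a. d (d a) = a) \<Longrightarrow> tdag d (wsingle u) = wsingle (map d u)"
  unfolding tdag_def wsingle_def by (rule ext) (metis map_involution)

lemma tdag_PA: "(\<And>a. d (d a) = a) \<Longrightarrow> d 1 = 1 \<Longrightarrow> tdag d (PA X) = PA (tdag d X)"
  by (simp add: PA_def tdag_tpre)

context
  fixes d :: "'a::comm_ring_1 \<Rightarrow> 'a"
  assumes d_inv: "\<And>a. d (d a) = a"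
    and d_mult: "\<And>a b. d (a * b) = d a * d b"
    and d_one: "d 1 = 1"
begin

lemma tdag_lsh: "tdag d (lsh U V) = (lsh (map d U) (map d V) :: _ \<Rightarrow> 'k::comm_ring_1)"
proof (induction U V rule: lsh.induct)
  case (3 a U b V)
  have "tdag d (lsh (a # U) (b # V)) = (\<lambda>w. tdag d (tpre a (lsh U (b # V))) w
      + tdag d (tpre b (lsh (a # U) V)) w - tdag d (tpre (a * b) (tpre 1 (lsh U V))) w :: 'k)"
    by (simp add: tdag_def)
  then show ?case
    using "3.IH" by (simp add: tdag_tpre d_inv d_mult d_one)
qed (simp_all add: tdag_wsingle d_inv)

lemma supp_tdag: "supp (tdag d F) = map d ` supp F"
proof
  show "supp (tdag d F) \<subseteq> map d ` supp F"
    unfolding supp_def tdag_def using map_involution[OF d_inv] by (metis (mono_tags) image_eqI mem_Collect_eq subsetI)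
  show "map d ` supp F \<subseteq> supp (tdag d F)"
    unfolding supp_def tdag_def using map_involution[OF d_inv] by auto
qed

lemma tdag_linext: "tdag d (linext K F) = linext (\<lambda>u. tdag d (K (map d u))) (tdag d F)"
proof (rule ext)
  fix w
  have "inj_on (map d) (supp F)"
    by (metis inj_onI map_involution d_inv)
  then show "tdag d (linext K F) w = linext (\<lambda>u. tdag d (K (map d u))) (tdag d F) w"
    unfolding linext_def supp_tdag by (simp add: sum.reindex tdag_def comp_def d_inv)
qed

lemma tdag_bar:
  fixes X Y :: "'a list \<Rightarrow> 'k::comm_ring_1"
  shows "tdag d (bar X Y) = bar (tdag d X) (tdag d Y)"
proof -
  have "tdag d (barw (map d u) (map d v)) = (barw u v :: _ \<Rightarrow> 'k)" for u v :: "'a list"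
    by (cases u; cases v) (simp_all add: tdag_tpre tdag_lsh d_inv d_mult comp_def)
  then show ?thesis
    by (simp add: bar_eq_linext tdag_linext)
qed

lemma tdag_tprec: "tdag d (tprec X Y) = tprec (tdag d X) (tdag d Y)"
  by (simp add: tprec_def tdag_bar tdag_PA d_inv d_one)

lemma tdag_tbul:
  fixes X Y :: "'a list \<Rightarrow> 'k::comm_ring_1"
  shows "tdag d (tbul X Y) = tbul (tdag d X) (tdag d Y)"
proof -
  have "tdag d (PA (wsingle [1])) = (PA (wsingle [1]) :: _ \<Rightarrow> 'k)"
    by (simp add: tdag_PA tdag_wsingle d_inv d_one)
  moreover have "tdag d (\<lambda>w. - F w) = (\<lambda>w. - tdag d F w)" for F :: "'a list \<Rightarrow> 'k"
    by (simp add: tdag_def)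
  ultimately show ?thesis
    by (simp add: tbul_def tdag_bar)
qed

end

lemma teq_refl [simp]: "teq scale X X"
  by (simp add: teq_def tnull.zero)

theorem corollary4p10:
  fixes scale :: "'k::field_char_0 \<Rightarrow> 'a::comm_ring_1 \<Rightarrow> 'a"
    and dag :: "'a \<Rightarrow> 'a"
  assumes mod: "Modules.module scale"
    and alg: "\<And>c a b. scale c (a * b) = scale c a * b"
    and dag_add: "\<And>a b. dag (a + b) = dag a + dag b"
    and dag_scale: "\<And>c a. dag (scale c a) = scale c (dag a)"
    and dag_inv: "\<And>a. dag (dag a) = a"
    and dag_mult: "\<And>a b. dag (a * b) = dag b * dag a"
  shows
    "\<forall>X Y Z :: 'a list \<Rightarrow> 'k. tplus X \<and> tplus Y \<and> tplus Z \<longrightarrow>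
        teq scale (tprec (tprec X Y) Z) (tprec X (tstar Y Z))
      \<and> teq scale (tprec (tsucc X Y) Z) (tsucc X (tprec Y Z))
      \<and> teq scale (tsucc (tstar X Y) Z) (tsucc X (tsucc Y Z))
      \<and> teq scale (tbul (tsucc X Y) Z) (tsucc X (tbul Y Z))
      \<and> teq scale (tbul (tprec X Y) Z) (tbul X (tsucc Y Z))
      \<and> teq scale (tprec (tbul X Y) Z) (tbul X (tprec Y Z))
      \<and> teq scale (tbul (tbul X Y) Z) (tbul X (tbul Y Z))
      \<and> teq scale (tprec X Y) (tsucc Y X)
      \<and> teq scale (tbul X Y) (tbul Y X)
      \<and> teq scale (tdag dag (tprec X Y)) (tprec (tdag dag X) (tdag dag Y))
      \<and> teq scale (tdag dag (tbul X Y)) (tbul (tdag dag X) (tdag dag Y))"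
proof -
  have dag_one: "dag 1 = 1"
    using dag_mult[of "dag 1" 1] by (simp add: dag_inv)
  have dag_hom: "dag (a * b) = dag a * dag b" for a b
    by (simp add: dag_mult mult.commute)
  show ?thesis
    by (intro allI impI conjI; elim conjE)
      (simp_all add: tridendriform_axioms tbul_commute tplus_finite_supp
        tdag_tprec[OF dag_inv dag_hom dag_one] tdag_tbul[OF dag_inv dag_hom dag_one],
       simp add: tprec_eq_tsucc_swap)
qed

end
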